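(* Let $\mathcal N$ be a network with a binary collision profile and character $D^*$, let $T\ge\max(D^*,1)$ be an integer, and let $(A_0,A_1,\dots,A_k)$, $k\ge1$, be a closed path in $(\mathcal M_T,\mathcal E_T)$. Define the schedule $S$ of period $kT$ by $S[T,ak+i]=A_i$ for all $a\in\mathbb Z$ and $i=0,\dots,k-1$. Then $S$ is collision free.
   Context: A network is a triple $\mathcal N=(\mathcal L,\mathcal I,D_{\mathcal L})$ where $\mathcal L$ is a finite nonempty set of links, each $\mathcal I(l)$ is a collection of nonempty subsets of $\mathcal L$, and $D_{\mathcal L}$ assigns an integer $D_{\mathcal L}(l,l')$ to every pair with $l'\in\phi$ for some $\phi\in\mathcal I(l)$. The profile is binary if every $\phi\in\mathcal I(l)$ is a singleton. The character is $D^*=\max_{l}\max_{\phi\in\mathcal I(l)}\max_{l'\in\phi}|D_{\mathcal L}(l,l')|$ (0 if there are no collision sets). A schedule is a map $S:\mathcal L\times\mathbb Z\to\{0,1\}$; $S(l,t)$ has a collision if there is $\phi\in\mathcal I(l)$ with $S(l',t+D_{\mathcal L}(l,l'))=1$ for all $l'\in\phi$; $S$ is collision free if no $(l,t)$ with $S(l,t)=1$ has a collision. $S[T,k]$ is the $|\mathcal L|\times T$ binary matrix with $S[T,k](l,j)=S(l,kT+j)$, $j=0,\dots,T-1$. The scheduling graph $(\mathcal M_T,\mathcal E_T)$ has vertex set $\mathcal M_T$ = all $|\mathcal L|\times T$ binary matrices $A$ with $A=S'[T,0]$ for some collision-free schedule $S'$, and edge set $\mathcal E_T$ = all pairs $(A,B)$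 with $A=S'[T,0]$, $B=S'[T,1]$ for some collision-free schedule $S'$. A closed path is a sequence $(A_0,\dots,A_k)$ with $(A_i,A_{i+1})\in\mathcal E_T$ for all $i$ and $A_k=A_0$. *)

theory Defs
  imports Main
begin

text \<open>A network (L, I, D): links of type 'l, L the finite nonempty link set,
  I l the collision sets of link l, D the integer delays.
  A schedule is a map 'l => int => bool (True meaning the value 1).\<close>

definition network :: "'l set \<Rightarrow> ('l \<Rightarrow> 'l set set) \<Rightarrow> ('l \<Rightarrow> 'l \<Rightarrow> int) \<Rightarrow> bool" where
  "network L I D \<longleftrightarrow> finite L \<and> L \<noteq> {} \<and>
     (\<forall>l\<in>L. \<forall>\<phi>\<in>I l. \<phi> \<noteq> {} \<and> \<phi> \<subseteq> L)"

definition binary_profile :: "'l set \<Rightarrow> ('l \<Rightarrow> 'l set set) \<Rightarrow> bool" where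
  "binary_profile L I \<longleftrightarrow> (\<forall>l\<in>L. \<forall>\<phi>\<in>I l. \<exists>x. \<phi> = {x})"

definition character :: "'l set \<Rightarrow> ('l \<Rightarrow> 'l set set) \<Rightarrow> ('l \<Rightarrow> 'l \<Rightarrow> int) \<Rightarrow> int" where
  "character L I D = Max ({0} \<union> {\<bar>D l l'\<bar> | l \<phi> l'. l \<in> L \<and> \<phi> \<in> I l \<and> l' \<in> \<phi>})"

definition has_collision :: "('l \<Rightarrow> 'l set set) \<Rightarrow> ('l \<Rightarrow> 'l \<Rightarrow> int) \<Rightarrow> ('l \<Rightarrow> int \<Rightarrow> bool) \<Rightarrow> 'l \<Rightarrow> int \<Rightarrow> bool" where
  "has_collision I D S l t \<longleftrightarrow> (\<exists>\<phi>\<in>I l. \<forall>l'\<in>\<phi>. S l' (t + D l l'))"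

definition collision_free :: "'l set \<Rightarrow> ('l \<Rightarrow> 'l set set) \<Rightarrow> ('l \<Rightarrow> 'l \<Rightarrow> int) \<Rightarrow> ('l \<Rightarrow> int \<Rightarrow> bool) \<Rightarrow> bool" where
  "collision_free L I D S \<longleftrightarrow> (\<forall>l\<in>L. \<forall>t. S l t \<longrightarrow> \<not> has_collision I D S l t)"

text \<open>S[T,k]: the |L| x T binary matrix, represented as a function on L x {0..<T}
  (canonically False outside that index set).\<close>
definition block :: "'l set \<Rightarrow> ('l \<Rightarrow> int \<Rightarrow> bool) \<Rightarrow> nat \<Rightarrow> int \<Rightarrow> ('l \<Rightarrow> nat \<Rightarrow> bool)" where
  "block L S T k = (\<lambda>l j. l \<in> L \<and> j < T \<and> S l (k * int T + int j))"

definition sched_vertices :: "'l set \<Rightarrow> ('l \<Rightarrow> 'l set set) \<Rightarrow> ('l \<Rightarrow> 'l \<Rightarrow> int) \<Rightarrow> nat \<Rightarrow> ('l \<Rightarrow> nat \<Rightarrow> bool) set" where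
  "sched_vertices L I D T = {A. \<exists>S'. collision_free L I D S' \<and> A = block L S' T 0}"

definition sched_edges :: "'l set \<Rightarrow> ('l \<Rightarrow> 'l set set) \<Rightarrow> ('l \<Rightarrow> 'l \<Rightarrow> int) \<Rightarrow> nat \<Rightarrow> (('l \<Rightarrow> nat \<Rightarrow> bool) \<times> ('l \<Rightarrow> nat \<Rightarrow> bool)) set" where
  "sched_edges L I D T = {(A, B). \<exists>S'. collision_free L I D S' \<and> A = block L S' T 0 \<and> B = block L S' T 1}"

definition closed_path :: "'l set \<Rightarrow> ('l \<Rightarrow> 'l set set) \<Rightarrow> ('l \<Rightarrow> 'l \<Rightarrow> int) \<Rightarrow> nat \<Rightarrow> (nat \<Rightarrow> ('l \<Rightarrow> nat \<Rightarrow> bool)) \<Rightarrow> nat \<Rightarrow> bool" where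
  "closed_path L I D T A k \<longleftrightarrow> (\<forall>i<k. (A i, A (Suc i)) \<in> sched_edges L I D T) \<and> A k = A 0"

end

theory Submission
  imports Defs
begin

text \<open>Every two consecutive blocks of the periodic schedule S are consecutive blocks of
  some collision-free schedule, namely the one witnessing the corresponding edge of the
  closed path. A collision of a binary profile involves two slots at distance at most
  D* \<le> T, and two such slots always lie in a common window of two consecutive blocks;
  there S coincides with a collision-free schedule, so the collision cannot occur.\<close>

lemma abs_delay_le_character:
  assumes "network L I D" "l \<in> L" "\<phi> \<in> I l" "l' \<in> \<phi>"
  shows "\<bar>D l l'\<bar> \<le> character L I D"
proof -
  let ?delays = "{\<bar>D l l'\<bar> | l \<phi> l'. l \<in> L \<and> \<phi> \<in> I l \<and> l' \<in> \<phi>}"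
  have "?delays \<subseteq> (\<lambda>(l, l'). \<bar>D l l'\<bar>) ` (L \<times> L)"
    using assms(1) unfolding network_def by fastforce
  moreover have "finite (L \<times> L)"
    using assms(1) unfolding network_def by simp
  ultimately have "finite ({0} \<union> ?delays)"
    using finite_subset by blast
  moreover have "\<bar>D l l'\<bar> \<in> {0} \<union> ?delays"
    using assms by blast
  ultimately show ?thesis
    unfolding character_def by (rule Max_ge)
qed

lemma periodic_blocks_in_sched_edges:
  assumes "k \<ge> 1" and "closed_path L I D T A k"
    and periodic: "\<forall>a::int. \<forall>i<k. block L S T (a * int k + int i) = A i"
  shows "(block L S T m, block L S T (m + 1)) \<in> sched_edges L I D T"
proof -
  define a where "a = m div int k"
  define i where "i = nat (m mod int k)"
  have "i < k" and m: "m = a * int k + int i"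
    using assms(1) unfolding a_def i_def by (simp_all add: nat_less_iff)
  have "block L S T m = A i"
    using periodic \<open>i < k\<close> m by simp
  moreover have "block L S T (m + 1) = A (Suc i)"
  proof (cases "Suc i < k")
    case True
    then show ?thesis
      using periodic[rule_format, OF True, of a] by (simp add: m ac_simps)
  next
    case False
    then have "Suc i = k" and "m + 1 = (a + 1) * int k + int 0"
      using \<open>i < k\<close> m by (simp_all add: algebra_simps)
    moreover have "A k = A 0"
      using assms(2) unfolding closed_path_def by simp
    ultimately show ?thesis
      using periodic[rule_format, of 0 "a + 1"] assms(1) by simp
  qed
  ultimately show ?thesis
    using assms(2) \<open>i < k\<close> unfolding closed_path_def by simp
qed

lemma sched_edge_window:
  assumes "(block L S T m, block L S T (m + 1)) \<in> sched_edges L I D T"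
  obtains S' where "collision_free L I D S'"
    and "\<forall>x\<in>L. \<forall>y. 0 \<le> y \<and> y < 2 * int T \<longrightarrow> S' x y = S x (m * int T + y)"
proof -
  obtain S' where cf: "collision_free L I D S'"
    and first: "block L S T m = block L S' T 0" and second: "block L S T (m + 1) = block L S' T 1"
    using assms unfolding sched_edges_def by auto
  have "S' x y = S x (m * int T + y)" if "x \<in> L" "0 \<le> y" "y < 2 * int T" for x y
  proof (cases "y < int T")
    case True
    then have "nat y < T"
      using that by linarith
    then show ?thesis
      using fun_cong[OF fun_cong[OF first, of x], of "nat y"] that True
      by (simp add: block_def)
  next
    case False
    then have "nat (y - int T) < T"
      using that by linarith
    then show ?thesis
      using fun_cong[OF fun_cong[OF second, of x], of "nat (y - int T)"] that False
      by (simp add: block_def algebra_simps)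
  qed
  with cf that show ?thesis
    by blast
qed

lemma two_block_window:
  fixes t d :: int and T :: nat
  assumes "T \<ge> 1" and "\<bar>d\<bar> \<le> int T"
  obtains m where "0 \<le> t - m * int T" "t - m * int T < 2 * int T"
    and "0 \<le> t + d - m * int T" "t + d - m * int T < 2 * int T"
proof -
  define q where "q = t div int T"
  define r where "r = t mod int T"
  have t: "t = q * int T + r" and r: "0 \<le> r" "r < int T"
    using assms(1) unfolding q_def r_def by simp_all
  show ?thesis
  proof (cases "0 \<le> r + d")
    case True
    have "t - q * int T = r"
      by (simp add: t)
    with True r assms(2) show ?thesis
      by (intro that[of q]) linarith+
  next
    case False
    have "t - (q - 1) * int T = r + int T"
      by (simp add: t algebra_simps)
    with False r assms(2) show ?thesis
      by (intro that[of "q - 1"]) linarith+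
  qed
qed

lemma collision_free_if_block_pairs_in_sched_edges:
  assumes network: "network L I D" and binary: "binary_profile L I"
    and "T \<ge> 1" and "character L I D \<le> int T"
    and edges: "\<forall>m. (block L S T m, block L S T (m + 1)) \<in> sched_edges L I D T"
  shows "collision_free L I D S"
  unfolding collision_free_def
proof (intro ballI allI impI notI)
  fix l t
  assume l: "l \<in> L" and "S l t" and "has_collision I D S l t"
  then obtain \<phi> where \<phi>: "\<phi> \<in> I l" and "\<forall>l'\<in>\<phi>. S l' (t + D l l')"
    unfolding has_collision_def by blast
  moreover obtain l' where l': "\<phi> = {l'}"
    using binary l \<phi> unfolding binary_profile_def by blast
  ultimately have "S l' (t + D l l')" and "l' \<in> L"
    using network l unfolding network_def by auto
  have "\<bar>D l l'\<bar> \<le> int T"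
    using abs_delay_le_character[OF network l \<phi>] l' assms(4) by simp
  with \<open>T \<ge> 1\<close> obtain m where window:
    "0 \<le> t - m * int T" "t - m * int T < 2 * int T"
    "0 \<le> t + D l l' - m * int T" "t + D l l' - m * int T < 2 * int T"
    by (rule two_block_window)
  obtain S' where cf: "collision_free L I D S'"
    and agree: "\<forall>x\<in>L. \<forall>y. 0 \<le> y \<and> y < 2 * int T \<longrightarrow> S' x y = S x (m * int T + y)"
    using edges sched_edge_window by blast
  let ?t' = "t - m * int T"
  have "S' l ?t'" and "S' l' (?t' + D l l')"
    using agree window l \<open>l' \<in> L\<close> \<open>S l t\<close> \<open>S l' (t + D l l')\<close> by (simp_all add: algebra_simps)
  then have "has_collision I D S' l ?t'"
    using \<phi> l' unfolding has_collision_def by blast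
  with cf l \<open>S' l ?t'\<close> show False
    unfolding collision_free_def by blast
qed

theorem lemma4:
  fixes L :: "'l set" and I :: "'l \<Rightarrow> 'l set set" and D :: "'l \<Rightarrow> 'l \<Rightarrow> int"
    and T k :: nat and A :: "nat \<Rightarrow> ('l \<Rightarrow> nat \<Rightarrow> bool)" and S :: "'l \<Rightarrow> int \<Rightarrow> bool"
  assumes "network L I D"
    and "binary_profile L I"
    and "int T \<ge> max (character L I D) 1"
    and "k \<ge> 1"
    and "closed_path L I D T A k"
    and "\<forall>a::int. \<forall>i<k. block L S T (a * int k + int i) = A i"
  shows "collision_free L I D S"
proof (rule collision_free_if_block_pairs_in_sched_edges)
  show "T \<ge> 1" and "character L I D \<le> int T"
    using assms(3) by simp_all
  show "\<forall>m. (block L S T m, block L S T (m + 1)) \<in> sched_edges L I D T"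
    using periodic_blocks_in_sched_edges[OF assms(4-6)] by blast
qed (fact assms)+

end
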